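(* Let $X$ be a scattered topological space such that $\mathrm{Homeo}(X)$ is fully transitive, and assume each similarity class of $X$ is infinite. Then every closed normal subgroup of $\mathrm{Homeo}(X)$ is of the form $\mathrm{Fix}(A)$, where $A$ is a union of similarity classes (possibly empty).
   Context: A topological space (not assumed Hausdorff) is scattered if every nonempty subset has a point isolated in that subset. For scattered $X$, $\mathrm{Homeo}(X)$ carries the topology of pointwise convergence on $X$. Two points $x,y\in X$ are similar if there are neighbourhoods $U_x\ni x$, $U_y\ni y$ and a homeomorphism $h\colon U_x\to U_y$ with $h(x)=y$; the equivalence classes are similarity classes. $\mathrm{Homeo}(X)$ is fully transitive if for every $k$ and all $k$-tuples of pairwise distinct points $(x_1,\dots,x_k)$, $(y_1,\dots,y_k)$ with $x_i$ similar to $y_i$, some homeomorphism $g$ satisfies $g(x_i)=y_i$ for all $i$. For $A\subseteq X$, $\mathrm{Fix}(A)$ is the subgroup of homeomorphisms fixing every point of $A$ ($\mathrm{Fix}(\emptyset)=\mathrm{Homeo}(X)$). *)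

theory Defs
  imports "HOL-Analysis.Analysis" "HOL-Algebra.Coset"
begin

definition scattered_space :: "'a topology \<Rightarrow> bool" where
  "scattered_space X \<longleftrightarrow>
     (\<forall>S. S \<subseteq> topspace X \<and> S \<noteq> {} \<longrightarrow>
        (\<exists>x\<in>S. \<exists>U. openin X U \<and> U \<inter> S = {x}))"

definition homeos :: "'a topology \<Rightarrow> ('a \<Rightarrow> 'a) set" where
  "homeos X = {h. homeomorphic_map X X h \<and> (\<forall>x. x \<notin> topspace X \<longrightarrow> h x = x)}"

definition homeo_group :: "'a topology \<Rightarrow> ('a \<Rightarrow> 'a) monoid" where
  "homeo_group X = \<lparr>carrier = homeos X, mult = (\<lambda>g h. g \<circ> h), one = id\<rparr>"

definition pointwise_top :: "'a topology \<Rightarrow> ('a \<Rightarrow> 'a) topology" where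
  "pointwise_top X =
     subtopology (product_topology (\<lambda>_. X) (topspace X))
                 ((\<lambda>h. restrict h (topspace X)) ` homeos X)"

definition closed_in_homeo :: "'a topology \<Rightarrow> ('a \<Rightarrow> 'a) set \<Rightarrow> bool" where
  "closed_in_homeo X G \<longleftrightarrow> G \<subseteq> homeos X \<and>
     closedin (pointwise_top X) ((\<lambda>h. restrict h (topspace X)) ` G)"

definition similar :: "'a topology \<Rightarrow> 'a \<Rightarrow> 'a \<Rightarrow> bool" where
  "similar X x y \<longleftrightarrow> x \<in> topspace X \<and> y \<in> topspace X \<and>
     (\<exists>U V h. openin X U \<and> openin X V \<and> x \<in> U \<and> y \<in> V \<and>
        homeomorphic_map (subtopology X U) (subtopology X V) h \<and> h x = y)"

definition fully_transitive :: "'a topology \<Rightarrow> bool" where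
  "fully_transitive X \<longleftrightarrow>
     (\<forall>xs ys. length xs = length ys \<and> distinct xs \<and> distinct ys \<and>
        (\<forall>i<length xs. similar X (xs ! i) (ys ! i)) \<longrightarrow>
        (\<exists>g\<in>homeos X. \<forall>i<length xs. g (xs ! i) = ys ! i))"

definition Fix :: "'a topology \<Rightarrow> 'a set \<Rightarrow> ('a \<Rightarrow> 'a) set" where
  "Fix X A = {g \<in> homeos X. \<forall>a\<in>A. g a = a}"

end

theory Submission
  imports Defs
begin

text \<open>Let A be the set of points fixed by every element of N. By normality A is a union of
  similarity classes, and N is contained in Fix(A). For the converse, take v outside A and a finite
  set F not containing v. Conjugating an element of N that moves v, and then forming a commutator
  with a homeomorphism fixing F, gives an element of N that fixes F pointwise but moves v;
  conjugating once more sends v to any prescribed point similar to v outside F. Full transitivity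
  supplies the homeomorphisms, and the infinite similarity classes leave room for fresh points.
  By induction every element of Fix(A) agrees with an element of N on each finite set, so it lies
  in the pointwise closure of N, which is N.\<close>

section \<open>The homeomorphism group\<close>

lemma homeos_in_topspace: "h \<in> homeos X \<Longrightarrow> x \<in> topspace X \<Longrightarrow> h x \<in> topspace X"
  unfolding homeos_def using homeomorphic_imp_surjective_map by blast

lemma homeos_comp: "g \<in> homeos X \<Longrightarrow> h \<in> homeos X \<Longrightarrow> g \<circ> h \<in> homeos X"
  unfolding homeos_def by (auto intro: homeomorphic_map_compose)

lemma id_in_homeos: "id \<in> homeos X"
  unfolding homeos_def by simp

lemma homeos_inverse:
  assumes "h \<in> homeos X"
  obtains g where "g \<in> homeos X" "g \<circ> h = id" "h \<circ> g = id"
proof -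
  have hm: "homeomorphic_map X X h" and outside: "\<And>x. x \<notin> topspace X \<Longrightarrow> h x = x"
    using assms unfolding homeos_def by auto
  obtain g0 where g0: "homeomorphic_maps X X h g0"
    using hm homeomorphic_map_maps by blast
  define g where "g y = (if y \<in> topspace X then g0 y else y)" for y
  have h_topspace: "h ` topspace X \<subseteq> topspace X"
    using hm homeomorphic_imp_surjective_map by blast
  have "homeomorphic_maps X X h g"
    using g0 h_topspace unfolding homeomorphic_maps_def g_def
    by (auto elim: continuous_map_eq)
  then have g: "homeomorphic_map X X g" "\<forall>x \<in> topspace X. g (h x) = x" "\<forall>y \<in> topspace X. h (g y) = y"
    by (auto simp: homeomorphic_maps_map)
  show thesis
  proof
    show "g \<in> homeos X"
      using g(1) unfolding homeos_def g_def by auto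
    show "g \<circ> h = id" "h \<circ> g = id"
      using g(2,3) outside h_topspace by (auto simp: g_def fun_eq_iff image_subset_iff)
  qed
qed

lemma inj_homeos: "h \<in> homeos X \<Longrightarrow> inj h"
  by (erule homeos_inverse) (metis inj_on_id inj_on_imageI2)

lemma homeos_eqI:
  assumes "g \<in> homeos X" "f \<in> homeos X" "restrict g (topspace X) = restrict f (topspace X)"
  shows "g = f"
proof
  fix x
  show "g x = f x"
  proof (cases "x \<in> topspace X")
    case True
    then show ?thesis
      using fun_cong[OF assms(3), of x] by simp
  next
    case False
    then show ?thesis
      using assms(1,2) by (simp add: homeos_def)
  qed
qed

lemma homeo_group_simps [simp]:
  "carrier (homeo_group X) = homeos X"
  "x \<otimes>\<^bsub>homeo_group X\<^esub> y = x \<circ> y"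
  "\<one>\<^bsub>homeo_group X\<^esub> = id"
  by (simp_all add: homeo_group_def)

lemma group_homeo_group: "group (homeo_group X)"
proof (rule groupI)
  fix h assume "h \<in> carrier (homeo_group X)"
  then obtain g where "g \<in> homeos X" "g \<circ> h = id"
    using homeos_inverse by (metis homeo_group_simps(1))
  then show "\<exists>g\<in>carrier (homeo_group X). g \<otimes>\<^bsub>homeo_group X\<^esub> h = \<one>\<^bsub>homeo_group X\<^esub>"
    by auto
qed (simp_all add: homeos_comp id_in_homeos comp_assoc)

section \<open>Similarity under full transitivity\<close>

lemma similar_refl: "x \<in> topspace X \<Longrightarrow> similar X x x"
  unfolding similar_def by (intro conjI exI[of _ "topspace X"] exI[of _ id]) auto

lemma similar_homeos: "g \<in> homeos X \<Longrightarrow> x \<in> topspace X \<Longrightarrow> similar X x (g x)"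
  unfolding similar_def using homeos_in_topspace[of g X x]
  by (intro conjI exI[of _ "topspace X"] exI[of _ g]) (auto simp: homeos_def)

lemma fully_transitive_fixing_finite:
  assumes "fully_transitive X" "finite F" "F \<subseteq> topspace X"
    and "p \<notin> F" "q \<notin> F" "similar X p q"
  obtains g where "g \<in> homeos X" "\<forall>y\<in>F. g y = y" "g p = q"
proof -
  obtain xs where xs: "set xs = F" "distinct xs"
    using finite_distinct_list[OF assms(2)] by blast
  have "length (xs @ [p]) = length (xs @ [q]) \<and> distinct (xs @ [p]) \<and> distinct (xs @ [q]) \<and>
      (\<forall>i<length (xs @ [p]). similar X ((xs @ [p]) ! i) ((xs @ [q]) ! i))"
    using xs assms(3-6) by (auto simp: nth_append intro!: similar_refl)
  then obtain g where g: "g \<in> homeos X" "\<forall>i<length (xs @ [p]). g ((xs @ [p]) ! i) = (xs @ [q]) ! i"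
    using assms(1) unfolding fully_transitive_def by blast
  show thesis
  proof
    show "\<forall>y\<in>F. g y = y"
    proof
      fix y assume "y \<in> F"
      then obtain i where "i < length xs" "xs ! i = y"
        using xs(1) by (auto simp: in_set_conv_nth)
      then show "g y = y"
        using g(2)[rule_format, of i] by (simp add: nth_append)
    qed
    show "g p = q"
      using g(2)[rule_format, of "length xs"] by simp
  qed (fact g(1))
qed

lemma similar_sym:
  assumes "fully_transitive X" "similar X x y"
  shows "similar X y x"
proof -
  obtain g where g: "g \<in> homeos X" "g x = y"
    using fully_transitive_fixing_finite[OF assms(1), of "{}" x y] assms(2) by auto
  obtain g' where "g' \<in> homeos X" "g' \<circ> g = id"
    using homeos_inverse[OF g(1)] by blast
  moreover have "y \<in> topspace X"
    using assms(2) by (simp add: similar_def)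
  ultimately show ?thesis
    using similar_homeos g(2) by (metis comp_apply id_apply)
qed

lemma similar_trans:
  assumes "fully_transitive X" "similar X x y" "similar X y z"
  shows "similar X x z"
proof -
  obtain g where g: "g \<in> homeos X" "g x = y"
    using fully_transitive_fixing_finite[OF assms(1), of "{}" x y] assms(2) by auto
  obtain h where h: "h \<in> homeos X" "h y = z"
    using fully_transitive_fixing_finite[OF assms(1), of "{}" y z] assms(3) by auto
  have "x \<in> topspace X"
    using assms(2) by (simp add: similar_def)
  from similar_homeos[OF homeos_comp[OF h(1) g(1)] this] show ?thesis
    using g(2) h(2) by simp
qed

section \<open>Pointwise approximation and closed subgroups\<close>

lemma openin_product_topology_finite_agreement:
  assumes "openin (product_topology Y I) T" "r \<in> T"
  obtains S where "finite S" "S \<subseteq> I"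
    "\<forall>r'\<in>topspace (product_topology Y I). (\<forall>i\<in>S. r' i = r i) \<longrightarrow> r' \<in> T"
proof -
  obtain U where U: "finite {i \<in> I. U i \<noteq> topspace (Y i)}" "r \<in> Pi\<^sub>E I U" "Pi\<^sub>E I U \<subseteq> T"
    using assms unfolding openin_product_topology_alt by blast
  show thesis
  proof
    show "\<forall>r'\<in>topspace (product_topology Y I).
            (\<forall>i\<in>{i \<in> I. U i \<noteq> topspace (Y i)}. r' i = r i) \<longrightarrow> r' \<in> T"
    proof (intro ballI impI)
      fix r' assume r': "r' \<in> topspace (product_topology Y I)"
        "\<forall>i\<in>{i \<in> I. U i \<noteq> topspace (Y i)}. r' i = r i"
      have "r' i \<in> U i" if "i \<in> I" for i
        using r' U(2) that by (cases "U i = topspace (Y i)") (auto simp: PiE_iff)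
      then have "r' \<in> Pi\<^sub>E I U"
        using r'(1) by (simp add: PiE_iff)
      with U(3) show "r' \<in> T"
        by blast
    qed
  qed (use U(1) in auto)
qed

lemma closed_in_homeo_finite_approximation:
  assumes closed: "closed_in_homeo X N" and f: "f \<in> homeos X"
    and approx: "\<And>S. finite S \<Longrightarrow> S \<subseteq> topspace X \<Longrightarrow> \<exists>g\<in>N. \<forall>x\<in>S. g x = f x"
  shows "f \<in> N"
proof -
  let ?P = "product_topology (\<lambda>_. X) (topspace X)"
  let ?r = "\<lambda>h. restrict h (topspace X)"
  have N_homeos: "N \<subseteq> homeos X"
    using closed by (simp add: closed_in_homeo_def)
  have r_topspace: "?r h \<in> topspace ?P" if "h \<in> homeos X" for h
    using homeos_in_topspace[OF that] by simp
  obtain C where C: "closedin ?P C" "?r ` N = C \<inter> ?r ` homeos X"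
    using closed unfolding closed_in_homeo_def pointwise_top_def closedin_subtopology by auto
  have "?r f \<in> C"
  proof (rule ccontr)
    assume "?r f \<notin> C"
    with r_topspace[OF f] have f_mem: "?r f \<in> topspace ?P - C"
      by simp
    have "openin ?P (topspace ?P - C)"
      using C(1) by (simp add: closedin_def)
    then obtain S where S: "finite S" "S \<subseteq> topspace X"
      and agree: "\<forall>r'\<in>topspace ?P. (\<forall>i\<in>S. r' i = ?r f i) \<longrightarrow> r' \<in> topspace ?P - C"
      using openin_product_topology_finite_agreement[OF _ f_mem] by blast
    obtain g where g: "g \<in> N" "\<forall>x\<in>S. g x = f x"
      using approx[OF S] by blast
    have "\<forall>i\<in>S. ?r g i = ?r f i"
      using g(2) S(2) by auto
    then have "?r g \<notin> C"
      using agree r_topspace g(1) N_homeos by blast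
    moreover have "?r g \<in> C"
      using C(2) g(1) by blast
    ultimately show False
      by blast
  qed
  then have "?r f \<in> ?r ` N"
    unfolding C(2) using f by blast
  then obtain g where g: "?r f = ?r g" "g \<in> N"
    by (rule imageE)
  then have "g = f"
    using homeos_eqI[of g X f] f N_homeos by auto
  with g(2) show ?thesis
    by simp
qed

section \<open>Normal subgroups of the homeomorphism group\<close>

locale normal_homeo_subgroup =
  fixes X :: "'a topology" and N :: "('a \<Rightarrow> 'a) set"
  assumes normal: "N \<lhd> homeo_group X"
begin

lemma subset_homeos: "N \<subseteq> homeos X"
  using normal_imp_subgroup[OF normal] subgroup.subset by fastforce

lemma id_mem: "id \<in> N"
  using subgroup.one_closed[OF normal_imp_subgroup[OF normal]] by simp

lemma comp_mem: "m \<in> N \<Longrightarrow> n \<in> N \<Longrightarrow> m \<circ> n \<in> N"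
  using subgroup.m_closed[OF normal_imp_subgroup[OF normal]] by fastforce

lemma inverse_mem:
  assumes "n \<in> N"
  obtains m where "m \<in> N" "\<And>x. m (n x) = x"
proof
  interpret group "homeo_group X" by (rule group_homeo_group)
  have "n \<in> homeos X"
    using assms subset_homeos by blast
  then show "(inv\<^bsub>homeo_group X\<^esub> n) (n x) = x" for x
    using l_inv[of n] by (simp add: fun_eq_iff)
  show "inv\<^bsub>homeo_group X\<^esub> n \<in> N"
    using subgroup.m_inv_closed[OF normal_imp_subgroup[OF normal] assms] .
qed

lemma conjugate_mem:
  assumes "h \<in> homeos X" "n \<in> N"
  obtains m where "m \<in> N" "\<And>x. m (h x) = h (n x)"
proof
  interpret group "homeo_group X" by (rule group_homeo_group)
  show "h \<circ> n \<circ> inv\<^bsub>homeo_group X\<^esub> h \<in> N"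
    using normal.inv_op_closed2[OF normal, of h n] assms by simp
  show "(h \<circ> n \<circ> inv\<^bsub>homeo_group X\<^esub> h) (h x) = h (n x)" for x
    using l_inv[of h] assms(1) by (simp add: fun_eq_iff)
qed

definition fixed_points :: "'a set" where
  "fixed_points = {x \<in> topspace X. \<forall>n\<in>N. n x = x}"

lemma subset_Fix_fixed_points: "N \<subseteq> Fix X fixed_points"
  using subset_homeos by (auto simp: Fix_def fixed_points_def)

lemma fixed_points_similar:
  assumes "fully_transitive X" "x \<in> fixed_points" "similar X x y"
  shows "y \<in> fixed_points"
proof -
  obtain h where h: "h \<in> homeos X" "h x = y"
    using fully_transitive_fixing_finite[OF assms(1), of "{}" x y] assms(3) by auto
  obtain h' where h': "h' \<in> homeos X" "h' \<circ> h = id"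
    using homeos_inverse[OF h(1)] by blast
  have h'_y: "h' y = x"
    using fun_cong[OF h'(2), of x] h(2) by simp
  have "n y = y" if n: "n \<in> N" for n
  proof -
    obtain m where m: "m \<in> N" "\<And>z. m (h' z) = h' (n z)"
      using conjugate_mem[OF h'(1) n] by blast
    have "h' (n y) = m x"
      using m(2)[of y] h'_y by simp
    also have "\<dots> = h' y"
      using assms(2) m(1) h'_y unfolding fixed_points_def by simp
    finally show ?thesis
      using inj_homeos[OF h'(1)] by (simp add: inj_eq)
  qed
  moreover have "y \<in> topspace X"
    using assms(3) by (simp add: similar_def)
  ultimately show ?thesis
    unfolding fixed_points_def by blast
qed

end

locale normal_subgroup_of_fully_transitive = normal_homeo_subgroup +
  assumes fully_transitive: "fully_transitive X"
    and infinite_classes: "\<And>x. x \<in> topspace X \<Longrightarrow> infinite {y. similar X x y}"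
begin

lemma similar_outside_finite:
  assumes "x \<in> topspace X" "finite E"
  obtains y where "similar X x y" "y \<notin> E"
proof -
  have "{y. similar X x y} - E \<noteq> {}"
    using infinite_imp_nonempty[OF Diff_infinite_finite[OF assms(2) infinite_classes[OF assms(1)]]] .
  then obtain y where "y \<in> {y. similar X x y} - E"
    by blast
  then show thesis
    by (intro that) auto
qed

lemma moves_point_off_finite:
  assumes v: "v \<in> topspace X" "v \<notin> fixed_points" and F: "finite F"
  obtains b where "b \<in> N" "b v \<notin> F"
proof -
  obtain n where n: "n \<in> N" "n v \<noteq> v"
    using v unfolding fixed_points_def by blast
  have "n \<in> homeos X"
    using n(1) subset_homeos by blast
  from homeos_in_topspace[OF this v(1)] obtain w where w: "similar X (n v) w" "w \<notin> insert v F"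
    using similar_outside_finite[of "n v" "insert v F"] F by blast
  obtain h where h: "h \<in> homeos X" "h v = v" "h (n v) = w"
    using fully_transitive_fixing_finite[OF fully_transitive, of "{v}" "n v" w] v(1) n(2) w by auto
  obtain b where b: "b \<in> N" "\<And>x. b (h x) = h (n x)"
    using conjugate_mem[OF h(1) n(1)] by blast
  have "b v = w"
    using b(2)[of v] h by simp
  then show thesis
    using that b(1) w(2) by blast
qed

lemma fixes_finite_moves_point:
  assumes v: "v \<in> topspace X" "v \<notin> fixed_points" "v \<notin> F" and F: "finite F" "F \<subseteq> topspace X"
  obtains k where "k \<in> N" "\<forall>y\<in>F. k y = y" "k v \<noteq> v"
proof -
  obtain b where b: "b \<in> N" "b v \<notin> insert v F"
    using moves_point_off_finite[OF v(1,2), of "insert v F"] F(1) by blast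
  have b_homeo: "b \<in> homeos X"
    using b(1) subset_homeos by blast
  define E where "E = insert v (F \<union> b ` F)"
  have E: "finite E" "E \<subseteq> topspace X"
    unfolding E_def using F v(1) homeos_in_topspace[OF b_homeo] by auto
  have bv_E: "b v \<notin> E"
    unfolding E_def using b(2) v(3) inj_homeos[OF b_homeo] by (auto simp: inj_image_mem_iff)
  have "b v \<in> topspace X"
    using homeos_in_topspace[OF b_homeo v(1)] .
  then obtain w where w: "similar X (b v) w" "w \<notin> insert (b v) E"
    using similar_outside_finite[of "b v" "insert (b v) E"] E(1) by blast
  obtain h where h: "h \<in> homeos X" "\<forall>y\<in>E. h y = y" "h (b v) = w"
    using fully_transitive_fixing_finite[OF fully_transitive E bv_E, of w] w by auto
  obtain m where m: "m \<in> N" "\<And>x. m (h x) = h (b x)"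
    using conjugate_mem[OF h(1) b(1)] by blast
  obtain b' where b': "b' \<in> N" "\<And>x. b' (b x) = x"
    using inverse_mem[OF b(1)] by blast
  \<comment> \<open>The commutator b' \<circ> m = b^-1 h b h^-1 fixes F because h fixes F and b ` F,
    and moves v because h moves b v.\<close>
  show thesis
  proof
    show "b' \<circ> m \<in> N"
      using comp_mem[OF b'(1) m(1)] .
    show "\<forall>y\<in>F. (b' \<circ> m) y = y"
    proof
      fix y assume "y \<in> F"
      then have "h y = y" "h (b y) = b y"
        using h(2) unfolding E_def by auto
      then show "(b' \<circ> m) y = y"
        using m(2)[of y] b'(2) by simp
    qed
    have "b' \<in> homeos X"
      using b'(1) subset_homeos by blast
    from inj_homeos[OF this] have "b' w \<noteq> b' (b v)"
      using w(2) by (auto simp: inj_eq)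
    moreover have "(b' \<circ> m) v = b' w"
      using m(2)[of v] h(2,3) unfolding E_def by simp
    ultimately show "(b' \<circ> m) v \<noteq> v"
      using b'(2) by simp
  qed
qed

lemma fixes_finite_maps_point:
  assumes v: "v \<notin> fixed_points" "v \<notin> F" and w: "w \<notin> F" "similar X v w"
    and F: "finite F" "F \<subseteq> topspace X"
  obtains k where "k \<in> N" "\<forall>y\<in>F. k y = y" "k v = w"
proof (cases "w = v")
  case True
  then show thesis
    using that id_mem by simp
next
  case False
  have v_topspace: "v \<in> topspace X"
    using w(2) by (simp add: similar_def)
  obtain k where k: "k \<in> N" "\<forall>y\<in>F. k y = y" "k v \<noteq> v"
    using fixes_finite_moves_point[OF v_topspace v F] by blast
  have k_homeo: "k \<in> homeos X"
    using k(1) subset_homeos by blast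
  have "k v \<notin> F"
  proof
    assume "k v \<in> F"
    then have "k (k v) = k v"
      using k(2) by blast
    with k(3) show False
      using inj_homeos[OF k_homeo] by (simp add: inj_eq)
  qed
  with k(3) have kv_F: "k v \<notin> insert v F"
    by simp
  have "similar X (k v) w"
    using similar_trans[OF fully_transitive similar_sym[OF fully_transitive
          similar_homeos[OF k_homeo v_topspace]] w(2)] .
  then obtain h where h: "h \<in> homeos X" "\<forall>y\<in>insert v F. h y = y" "h (k v) = w"
    using fully_transitive_fixing_finite[OF fully_transitive, of "insert v F" "k v" w]
      F v_topspace kv_F w(1) False by auto
  obtain m where m: "m \<in> N" "\<And>x. m (h x) = h (k x)"
    using conjugate_mem[OF h(1) k(1)] by blast
  show thesis
  proof (rule that[OF m(1)])
    show "\<forall>y\<in>F. m y = y"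
    proof
      fix y assume "y \<in> F"
      then have "h y = y" "k y = y"
        using h(2) k(2) by auto
      then show "m y = y"
        using m(2)[of y] by simp
    qed
    show "m v = w"
      using m(2)[of v] h(2,3) by simp
  qed
qed

lemma Fix_fixed_points_extend_agreement:
  assumes f: "f \<in> Fix X fixed_points" and g: "g \<in> N" "\<forall>y\<in>S. g y = f y"
    and S: "finite S" "S \<subseteq> topspace X" and x: "x \<in> topspace X" "x \<notin> S"
  obtains g' where "g' \<in> N" "\<forall>y\<in>insert x S. g' y = f y"
proof (cases "g x = f x")
  case True
  then show thesis
    using that g by auto
next
  case False
  have homeos: "f \<in> homeos X" "g \<in> homeos X"
    using f g(1) subset_homeos by (auto simp: Fix_def)
  have "x \<notin> fixed_points"
  proof
    assume "x \<in> fixed_points"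
    then have "g x = x" "f x = x"
      using f g(1) by (auto simp: Fix_def fixed_points_def)
    with False show False
      by simp
  qed
  moreover have gx_x: "similar X (g x) x"
    using similar_sym[OF fully_transitive similar_homeos[OF homeos(2) x(1)]] .
  ultimately have gx: "g x \<notin> fixed_points"
    using fixed_points_similar[OF fully_transitive] by blast
  have g_S: "g ` S = f ` S"
    using g(2) by auto
  have outside: "g x \<notin> g ` S" "f x \<notin> g ` S"
    using x(2) inj_homeos[OF homeos(2)] inj_homeos[OF homeos(1)]
    by (simp add: inj_image_mem_iff, simp add: g_S inj_image_mem_iff)
  have similar: "similar X (g x) (f x)"
    using similar_trans[OF fully_transitive gx_x similar_homeos[OF homeos(1) x(1)]] .
  have finite: "finite (g ` S)" "g ` S \<subseteq> topspace X"
    using S homeos_in_topspace[OF homeos(2)] by auto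
  obtain k where k: "k \<in> N" "\<forall>y\<in>g ` S. k y = y" "k (g x) = f x"
    using fixes_finite_maps_point[OF gx outside similar finite] by blast
  show thesis
  proof (rule that)
    show "k \<circ> g \<in> N"
      using comp_mem[OF k(1) g(1)] .
    show "\<forall>y\<in>insert x S. (k \<circ> g) y = f y"
      using k g(2) by auto
  qed
qed

lemma Fix_fixed_points_finite_approximation:
  assumes f: "f \<in> Fix X fixed_points"
  shows "finite S \<Longrightarrow> S \<subseteq> topspace X \<Longrightarrow> \<exists>g\<in>N. \<forall>x\<in>S. g x = f x"
proof (induction S rule: finite_induct)
  case empty
  then show ?case
    using id_mem by blast
next
  case (insert x S)
  then obtain g where "g \<in> N" "\<forall>y\<in>S. g y = f y"
    by auto
  with insert show ?case
    using Fix_fixed_points_extend_agreement[OF f] by (metis insert_subset)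
qed

end

theorem proposition18:
  fixes X :: "'a topology" and N :: "('a \<Rightarrow> 'a) set"
  assumes "scattered_space X"
    and "fully_transitive X"
    and "\<And>x. x \<in> topspace X \<Longrightarrow> infinite {y. similar X x y}"
    and "N \<lhd> homeo_group X"
    and "closed_in_homeo X N"
  shows "\<exists>A. A \<subseteq> topspace X \<and> (\<forall>x\<in>A. \<forall>y. similar X x y \<longrightarrow> y \<in> A) \<and> N = Fix X A"
proof -
  interpret normal_subgroup_of_fully_transitive X N
    using assms(2-4)
    by (simp add: normal_subgroup_of_fully_transitive_def normal_homeo_subgroup_def
        normal_subgroup_of_fully_transitive_axioms_def)
  have "Fix X fixed_points \<subseteq> N"
  proof
    fix f assume f: "f \<in> Fix X fixed_points"
    then have "f \<in> homeos X"
      by (simp add: Fix_def)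
    then show "f \<in> N"
      by (rule closed_in_homeo_finite_approximation[OF assms(5) _
            Fix_fixed_points_finite_approximation[OF f]])
  qed
  show ?thesis
  proof (intro exI conjI)
    show "fixed_points \<subseteq> topspace X"
      by (auto simp: fixed_points_def)
    show "\<forall>x\<in>fixed_points. \<forall>y. similar X x y \<longrightarrow> y \<in> fixed_points"
      using fixed_points_similar[OF assms(2)] by blast
    show "N = Fix X fixed_points"
      using subset_Fix_fixed_points \<open>Fix X fixed_points \<subseteq> N\<close> by blast
  qed
qed

end
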